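(* Let $\odot$ be a pseudo-multiplication on $[0,\infty]$ with left identity $1_{\odot}$, and let $O(t)=\inf_{s>0} s\odot t$. Then there exists some $t>0$ which is $\odot$-finite (i.e. $O(t)=0$) if and only if $1_{\odot}$ is $\odot$-finite (i.e. $O(1_{\odot})=0$).
   Context: A pseudo-multiplication is a binary operation $\odot:[0,\infty]\times[0,\infty]\to[0,\infty]$ such that: $\odot$ is associative; $\odot$ is continuous on $(0,\infty)\times[0,\infty]$; for every $t$, the map $s\mapsto s\odot t$ is continuous on $(0,\infty]$; $\odot$ is nondecreasing in each argument; there is a left identity element $1_{\odot}$, i.e. $1_{\odot}\odot t=t$ for all $t$; there are no zero divisors, i.e. $s\odot t=0$ implies $s=0$ or $t=0$; and $0$ is an annihilator, i.e. $0\odot t=t\odot 0=0$ for all $t$. For $t\in[0,\infty]$ put $O(t)=\inf_{s>0} s\odot t$. An element $t$ is called $\odot$-finite if $O(t)=0$, and $\odot$-infinite otherwise. *)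

theory Defs
  imports "HOL-Analysis.Analysis" "HOL-Library.Extended_Nonnegative_Real"
begin

definition pseudo_mult :: "(ennreal \<Rightarrow> ennreal \<Rightarrow> ennreal) \<Rightarrow> ennreal \<Rightarrow> bool" where
  "pseudo_mult f e \<longleftrightarrow>
     (\<forall>a b c. f (f a b) c = f a (f b c)) \<and>
     continuous_on ({0<..<\<infinity>} \<times> UNIV) (\<lambda>p. f (fst p) (snd p)) \<and>
     (\<forall>t. continuous_on {0<..} (\<lambda>s. f s t)) \<and>
     (\<forall>s s' t t'. s \<le> s' \<longrightarrow> t \<le> t' \<longrightarrow> f s t \<le> f s' t') \<and>
     (\<forall>t. f e t = t) \<and>
     (\<forall>s t. f s t = 0 \<longrightarrow> s = 0 \<or> t = 0) \<and>
     (\<forall>t. f 0 t = 0 \<and> f t 0 = 0)"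

definition O_fun :: "(ennreal \<Rightarrow> ennreal \<Rightarrow> ennreal) \<Rightarrow> ennreal \<Rightarrow> ennreal" where
  "O_fun f t = (INF s\<in>{0<..}. f s t)"

definition pm_finite :: "(ennreal \<Rightarrow> ennreal \<Rightarrow> ennreal) \<Rightarrow> ennreal \<Rightarrow> bool" where
  "pm_finite f t \<longleftrightarrow> O_fun f t = 0"

end

theory Submission
  imports Defs
begin

text \<open>Since O(1) \<le> s \<odot> 1 for every s > 0, associativity and monotonicity give
  O(1) \<odot> t \<le> s \<odot> (1 \<odot> t) = s \<odot> t, hence O(1) \<odot> t \<le> O(t). So O(t) = 0 with t > 0
  forces O(1) = 0, as there are no zero divisors. Conversely 1 itself is positive,
  because 0 \<odot> t = 0 for all t.\<close>

lemma pseudo_mult_identity_pos: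
  assumes "pseudo_mult f e"
  shows "e > 0"
proof (rule ccontr)
  assume "\<not> e > 0"
  then have "e = 0" by (simp add: not_gr_zero)
  have "f 0 1 = 0" and "f e 1 = 1"
    using assms unfolding pseudo_mult_def by auto
  with \<open>e = 0\<close> show False by simp
qed

lemma O_fun_left_identity_mult_le:
  assumes assoc: "\<And>a b c. f (f a b) c = f a (f b c)"
    and mono: "\<And>s s' t. s \<le> s' \<Longrightarrow> f s t \<le> f s' t"
    and left_id: "\<And>t. f e t = t"
  shows "f (O_fun f e) t \<le> O_fun f t"
  unfolding O_fun_def
proof (rule INF_greatest)
  fix s :: ennreal
  assume "s \<in> {0<..}"
  then have "(INF s\<in>{0<..}. f s e) \<le> f s e" by (rule INF_lower)
  then have "f (INF s\<in>{0<..}. f s e) t \<le> f (f s e) t" by (rule mono)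
  also have "\<dots> = f s t" by (simp add: assoc left_id)
  finally show "f (INF s\<in>{0<..}. f s e) t \<le> f s t" .
qed

lemma pm_finite_identity_if_pm_finite_pos:
  assumes "pseudo_mult f e" and "t > 0" and "pm_finite f t"
  shows "pm_finite f e"
proof -
  have assoc: "\<And>a b c. f (f a b) c = f a (f b c)"
    and mono: "\<And>s s' t. s \<le> s' \<Longrightarrow> f s t \<le> f s' t"
    and left_id: "\<And>t. f e t = t"
    and no_zero_div: "\<And>s t. f s t = 0 \<Longrightarrow> s = 0 \<or> t = 0"
    using assms(1) unfolding pseudo_mult_def by auto
  have "f (O_fun f e) t \<le> O_fun f t"
    using assoc mono left_id by (rule O_fun_left_identity_mult_le)
  with \<open>pm_finite f t\<close> have "f (O_fun f e) t = 0"
    unfolding pm_finite_def by simp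
  with \<open>t > 0\<close> no_zero_div have "O_fun f e = 0" by blast
  then show ?thesis unfolding pm_finite_def .
qed

theorem lemma2p2:
  fixes f :: "ennreal \<Rightarrow> ennreal \<Rightarrow> ennreal" and e :: ennreal
  assumes "pseudo_mult f e"
  shows "(\<exists>t>0. pm_finite f t) \<longleftrightarrow> pm_finite f e"
  using assms pm_finite_identity_if_pm_finite_pos pseudo_mult_identity_pos by blast

end
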